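(* Let $X$ be an $L$-space with a convexifying operator $P$, $(T,r)$ a metric compact, $\mu$ a Borel measure on $T$, $\omega$ a modulus of continuity, and $Q\subset T$ a compact set with $\mu(Q)>0$. Then for all $t\in T$ and $f\in H^\omega(T,X)$, $$h_X\Big(P(f(t)),\tfrac{1}{\mu(Q)}\int_Q f(s)\,d\mu(s)\Big)\le\tfrac{1}{\mu(Q)}\int_Q\omega(r(t,s))\,d\mu(s).$$ If $X$ is isotropic and $X^{\rm c}\ne\{\theta\}$, then the inequality is sharp, i.e. for every $t\in T$ the supremum of the left-hand side over $f\in H^\omega(T,X)$ equals the right-hand side.
   Context: Semilinear space: a set $X$ with addition and multiplication by reals such that for all $x,y,z\in X$, $\alpha,\beta\in\mathbb R$: $x+y=y+x$; $x+(y+z)=(x+y)+z$; there is $\theta$ with $x+\theta=x$; $\alpha(x+y)=\alpha x+\alpha y$; $\alpha(\beta x)=(\alpha\beta)x$; $1\cdot x=x$, $0\cdot x=\theta$. $x$ is convex if $(\alpha+\beta)x=\alpha x+\beta x$ for all $\alpha,\beta\ge0$; $X^{\rm c}$ is the set of convex elements. An $L$-space is a semilinear space with a complete separable metric $h_X$ satisfying $h_X(\alpha x,\alpha y)=|\alpha|h_X(x,y)$ and $h_X(x+z,y+z)\le h_X(x,y)$; isotropic if the latter is always an equality. A convexifying operator is a surjective map $P\colon X\to X^{\rm c}$ with $h_X(P(x),P(y))\le h_X(x,y)$, $P\circ P=P$, $P(\alpha x+\beta y)=\alpha P(x)+\beta P(y)$ for all $x,y$, $\alpha,\beta\in\mathbb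 R$. Integral: $f\colon T\to X$ is measurable if $h_X(f(\cdot),x)$ is Borel measurable for each $x$; for a simple bounded $f$ taking the value $f_i$ on pairwise disjoint Borel sets $T_i$ covering $T$, $\int_T f\,d\mu=\sum_i P(f_i)\mu(T_i)$; for a bounded measurable $f$, $\int_Tf\,d\mu$ is the limit of the integrals of any uniformly bounded sequence of simple functions converging to $f$ $\mu$-a.e. (the limit exists and does not depend on the sequence); $\int_Q f\,d\mu=\int_T\chi_Qf\,d\mu$ with $\chi_Q$ the indicator of $Q$. A modulus of continuity is a non-decreasing continuous $\omega\colon[0,\infty)\to[0,\infty)$ with $\omega(0)=0$ and $\omega(a+b)\le\omega(a)+\omega(b)$; $H^\omega(T,X)=\{f\colon T\to X:\ h_X(f(s),f(t))\le\omega(r(s,t))\ \forall s,t\}$. *)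

theory Defs
  imports "HOL-Analysis.Analysis"
begin

definition semilinear_space ::
  "('a \<Rightarrow> 'a \<Rightarrow> 'a) \<Rightarrow> (real \<Rightarrow> 'a \<Rightarrow> 'a) \<Rightarrow> 'a \<Rightarrow> bool" where
  "semilinear_space add smul theta \<longleftrightarrow>
     (\<forall>x y. add x y = add y x) \<and>
     (\<forall>x y z. add x (add y z) = add (add x y) z) \<and>
     (\<forall>x. add x theta = x) \<and>
     (\<forall>a x y. smul a (add x y) = add (smul a x) (smul a y)) \<and>
     (\<forall>a b x. smul a (smul b x) = smul (a * b) x) \<and>
     (\<forall>x. smul 1 x = x) \<and>
     (\<forall>x. smul 0 x = theta)"

definition convex_elems ::
  "('a \<Rightarrow> 'a \<Rightarrow> 'a) \<Rightarrow> (real \<Rightarrow> 'a \<Rightarrow> 'a) \<Rightarrow> 'a set" where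
  "convex_elems add smul =
     {x. \<forall>a b. a \<ge> 0 \<longrightarrow> b \<ge> 0 \<longrightarrow> smul (a + b) x = add (smul a x) (smul b x)}"

definition is_metric :: "('a \<Rightarrow> 'a \<Rightarrow> real) \<Rightarrow> bool" where
  "is_metric h \<longleftrightarrow>
     (\<forall>x y. 0 \<le> h x y) \<and> (\<forall>x y. h x y = 0 \<longleftrightarrow> x = y) \<and>
     (\<forall>x y. h x y = h y x) \<and> (\<forall>x y z. h x z \<le> h x y + h y z)"

definition h_converges :: "('a \<Rightarrow> 'a \<Rightarrow> real) \<Rightarrow> (nat \<Rightarrow> 'a) \<Rightarrow> 'a \<Rightarrow> bool" where
  "h_converges h s l \<longleftrightarrow> (\<lambda>n. h (s n) l) \<longlonglongrightarrow> 0"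

definition h_complete :: "('a \<Rightarrow> 'a \<Rightarrow> real) \<Rightarrow> bool" where
  "h_complete h \<longleftrightarrow>
     (\<forall>s. (\<forall>e>0. \<exists>N. \<forall>m\<ge>N. \<forall>n\<ge>N. h (s m) (s n) < e) \<longrightarrow> (\<exists>l. h_converges h s l))"

definition h_separable :: "('a \<Rightarrow> 'a \<Rightarrow> real) \<Rightarrow> bool" where
  "h_separable h \<longleftrightarrow> (\<exists>D. countable D \<and> (\<forall>x. \<forall>e>0. \<exists>d\<in>D. h x d < e))"

definition L_space ::
  "('a \<Rightarrow> 'a \<Rightarrow> 'a) \<Rightarrow> (real \<Rightarrow> 'a \<Rightarrow> 'a) \<Rightarrow> 'a \<Rightarrow> ('a \<Rightarrow> 'a \<Rightarrow> real) \<Rightarrow> bool" where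
  "L_space add smul theta h \<longleftrightarrow>
     semilinear_space add smul theta \<and> is_metric h \<and> h_complete h \<and> h_separable h \<and>
     (\<forall>a x y. h (smul a x) (smul a y) = \<bar>a\<bar> * h x y) \<and>
     (\<forall>x y z. h (add x z) (add y z) \<le> h x y)"

definition isotropic :: "('a \<Rightarrow> 'a \<Rightarrow> 'a) \<Rightarrow> ('a \<Rightarrow> 'a \<Rightarrow> real) \<Rightarrow> bool" where
  "isotropic add h \<longleftrightarrow> (\<forall>x y z. h (add x z) (add y z) = h x y)"

definition convexifying_operator ::
  "('a \<Rightarrow> 'a \<Rightarrow> 'a) \<Rightarrow> (real \<Rightarrow> 'a \<Rightarrow> 'a) \<Rightarrow> ('a \<Rightarrow> 'a \<Rightarrow> real) \<Rightarrow> ('a \<Rightarrow> 'a) \<Rightarrow> bool" where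
  "convexifying_operator add smul h P \<longleftrightarrow>
     range P = convex_elems add smul \<and>
     (\<forall>x y. h (P x) (P y) \<le> h x y) \<and>
     (\<forall>x. P (P x) = P x) \<and>
     (\<forall>a b x y. P (add (smul a x) (smul b y)) = add (smul a (P x)) (smul b (P y)))"

definition X_measurable :: "('a \<Rightarrow> 'a \<Rightarrow> real) \<Rightarrow> 'b measure \<Rightarrow> ('b \<Rightarrow> 'a) \<Rightarrow> bool" where
  "X_measurable h M f \<longleftrightarrow> (\<forall>x. (\<lambda>t. h (f t) x) \<in> borel_measurable M)"

definition X_bounded :: "('a \<Rightarrow> 'a \<Rightarrow> real) \<Rightarrow> 'b set \<Rightarrow> ('b \<Rightarrow> 'a) \<Rightarrow> bool" where
  "X_bounded h S f \<longleftrightarrow> (\<exists>x0 C. \<forall>t\<in>S. h (f t) x0 \<le> C)"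

definition X_simple :: "'b measure \<Rightarrow> ('b \<Rightarrow> 'a) \<Rightarrow> bool" where
  "X_simple M f \<longleftrightarrow> finite (f ` space M) \<and> (\<forall>y. f -` {y} \<inter> space M \<in> sets M)"

definition simple_integral_X ::
  "('a \<Rightarrow> 'a \<Rightarrow> 'a) \<Rightarrow> (real \<Rightarrow> 'a \<Rightarrow> 'a) \<Rightarrow> 'a \<Rightarrow> ('a \<Rightarrow> 'a) \<Rightarrow> 'b measure \<Rightarrow> ('b \<Rightarrow> 'a) \<Rightarrow> 'a" where
  "simple_integral_X add smul theta P M f =
     Finite_Set.fold (\<lambda>y acc. add (smul (measure M (f -` {y} \<inter> space M)) (P y)) acc)
       theta (f ` space M)"

definition integral_X ::
  "('a \<Rightarrow> 'a \<Rightarrow> 'a) \<Rightarrow> (real \<Rightarrow> 'a \<Rightarrow> 'a) \<Rightarrow> 'a \<Rightarrow> ('a \<Rightarrow> 'a \<Rightarrow> real) \<Rightarrow> ('a \<Rightarrow> 'a)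
     \<Rightarrow> 'b measure \<Rightarrow> ('b \<Rightarrow> 'a) \<Rightarrow> 'a" where
  "integral_X add smul theta h P M f =
     (THE I. \<exists>s. (\<forall>n. X_simple M (s n)) \<and>
                (\<exists>x0 C. \<forall>n. \<forall>t\<in>space M. h (s n t) x0 \<le> C) \<and>
                (AE t in M. h_converges h (\<lambda>n. s n t) (f t)) \<and>
                h_converges h (\<lambda>n. simple_integral_X add smul theta P M (s n)) I)"

definition set_integral_X ::
  "('a \<Rightarrow> 'a \<Rightarrow> 'a) \<Rightarrow> (real \<Rightarrow> 'a \<Rightarrow> 'a) \<Rightarrow> 'a \<Rightarrow> ('a \<Rightarrow> 'a \<Rightarrow> real) \<Rightarrow> ('a \<Rightarrow> 'a)
     \<Rightarrow> 'b measure \<Rightarrow> 'b set \<Rightarrow> ('b \<Rightarrow> 'a) \<Rightarrow> 'a" where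
  "set_integral_X add smul theta h P M Q f =
     integral_X add smul theta h P M (\<lambda>s. if s \<in> Q then f s else theta)"

definition modulus_of_continuity :: "(real \<Rightarrow> real) \<Rightarrow> bool" where
  "modulus_of_continuity \<omega> \<longleftrightarrow>
     mono_on {0..} \<omega> \<and> continuous_on {0..} \<omega> \<and> \<omega> 0 = 0 \<and>
     (\<forall>a\<ge>0. \<omega> a \<ge> 0) \<and>
     (\<forall>a\<ge>0. \<forall>b\<ge>0. \<omega> (a + b) \<le> \<omega> a + \<omega> b)"

definition H_omega :: "(real \<Rightarrow> real) \<Rightarrow> ('a \<Rightarrow> 'a \<Rightarrow> real) \<Rightarrow> ('b::metric_space \<Rightarrow> 'a) set" where
  "H_omega \<omega> h = {f. \<forall>s t. h (f s) (f t) \<le> \<omega> (dist s t)}"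

end

theory Submission
  imports Defs
begin

(* For simple functions s, s' the estimate h(int s, int s') <= int h(s, s') follows termwise from
   the homogeneity of h, its contraction under translations and the non-expansiveness of P.
   Composing a function in H^omega with finite Borel quantizers of the compact space makes it a
   uniform limit of simple functions, so the estimate passes to its integral.  Comparing f with
   the function equal to f(t) on Q, whose integral is mu(Q) P(f(t)), gives the upper bound.
   For sharpness take f(s) = (omega(r(t,s)) / h(e,theta)) e with a convex e <> theta: then f is
   in H^omega, P(f(t)) = theta, and the integral of f over Q is the multiple of e whose distance
   from theta is exactly the bound. *)

section \<open>Semilinear L-spaces with a convexifying operator\<close>

locale convexified_L_space =
  fixes add :: "'a \<Rightarrow> 'a \<Rightarrow> 'a" and smul :: "real \<Rightarrow> 'a \<Rightarrow> 'a" and theta :: 'a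
    and h :: "'a \<Rightarrow> 'a \<Rightarrow> real" and P :: "'a \<Rightarrow> 'a"
  assumes L_space: "L_space add smul theta h"
    and convexifying: "convexifying_operator add smul h P"
begin

lemma semilinear: "semilinear_space add smul theta"
  using L_space by (simp add: L_space_def)

lemma add_commute: "add x y = add y x"
  using semilinear unfolding semilinear_space_def by blast

lemma add_assoc: "add x (add y z) = add (add x y) z"
  using semilinear unfolding semilinear_space_def by blast

lemma add_theta [simp]: "add x theta = x"
  using semilinear unfolding semilinear_space_def by blast

lemma theta_add [simp]: "add theta x = x"
  using add_commute add_theta by metis

lemma smul_smul [simp]: "smul a (smul b x) = smul (a * b) x"
  using semilinear unfolding semilinear_space_def by blast

lemma smul_one [simp]: "smul 1 x = x"
  using semilinear unfolding semilinear_space_def by blast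

lemma smul_zero [simp]: "smul 0 x = theta"
  using semilinear unfolding semilinear_space_def by blast

lemma smul_theta [simp]: "smul a theta = theta"
  by (metis smul_smul smul_zero mult_zero_right)

lemma metric: "is_metric h"
  using L_space by (simp add: L_space_def)

lemma h_nonneg: "0 \<le> h x y"
  using metric by (simp add: is_metric_def)

lemma h_eq_0_iff [simp]: "h x y = 0 \<longleftrightarrow> x = y"
  using metric by (simp add: is_metric_def)

lemma h_self [simp]: "h x x = 0"
  by simp

lemma h_commute: "h x y = h y x"
  using metric by (simp add: is_metric_def)

lemma h_triangle: "h x z \<le> h x y + h y z"
  using metric unfolding is_metric_def by blast

lemma h_le_0_iff: "h x y \<le> 0 \<longleftrightarrow> x = y"
  using h_nonneg[of x y] by auto

lemma h_smul: "h (smul a x) (smul a y) = \<bar>a\<bar> * h x y"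
  using L_space by (simp add: L_space_def)

lemma h_smul_theta: "h (smul a x) theta = \<bar>a\<bar> * h x theta"
  using h_smul[of a x theta] by simp

lemma h_add_right_le: "h (add x z) (add y z) \<le> h x y"
  using L_space by (simp add: L_space_def)

lemma h_add_add_le: "h (add x z) (add y w) \<le> h x y + h z w"
proof -
  have "h (add x z) (add y w) \<le> h (add x z) (add y z) + h (add y z) (add y w)"
    by (rule h_triangle)
  also have "h (add y z) (add y w) \<le> h z w"
    using h_add_right_le[of z y w] by (simp add: add_commute)
  finally show ?thesis
    using h_add_right_le[of x z y] by linarith
qed

lemma complete: "h_complete h"
  using L_space by (simp add: L_space_def)

lemma P_linear: "P (add (smul a x) (smul b y)) = add (smul a (P x)) (smul b (P y))"
  using convexifying by (simp add: convexifying_operator_def)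

lemma P_idem [simp]: "P (P x) = P x"
  using convexifying by (simp add: convexifying_operator_def)

lemma h_P_le: "h (P x) (P y) \<le> h x y"
  using convexifying by (simp add: convexifying_operator_def)

lemma range_P: "range P = convex_elems add smul"
  using convexifying by (simp add: convexifying_operator_def)

lemma P_smul: "P (smul a x) = smul a (P x)"
  using P_linear[of a x 0 x] by simp

lemma P_theta [simp]: "P theta = theta"
  using P_smul[of 0 theta] by simp

lemma P_in_convex_elems: "P x \<in> convex_elems add smul"
  using range_P by blast

lemma P_convex_elem: "e \<in> convex_elems add smul \<Longrightarrow> P e = e"
  using range_P P_idem by (metis rangeE)

lemma theta_in_convex_elems: "theta \<in> convex_elems add smul"
  using P_in_convex_elems[of theta] by simp

lemma smul_add_convex:
  "e \<in> convex_elems add smul \<Longrightarrow> 0 \<le> a \<Longrightarrow> 0 \<le> b \<Longrightarrow> smul (a + b) e = add (smul a e) (smul b e)"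
  by (simp add: convex_elems_def)

lemma h_smul_convex_le:
  assumes e: "e \<in> convex_elems add smul" and "0 \<le> a" "0 \<le> b"
  shows "h (smul a e) (smul b e) \<le> \<bar>a - b\<bar> * h e theta"
proof -
  have le: "h (smul x e) (smul y e) \<le> (x - y) * h e theta" if "0 \<le> y" "y \<le> x" for x y
  proof -
    have "smul x e = add (smul (x - y) e) (smul y e)"
      using smul_add_convex[OF e, of "x - y" y] that by simp
    then have "h (smul x e) (smul y e) \<le> h (smul (x - y) e) theta"
      using h_add_right_le[of "smul (x - y) e" "smul y e" theta] by simp
    also have "\<dots> = (x - y) * h e theta"
      using that by (simp add: h_smul_theta)
    finally show ?thesis .
  qed
  show ?thesis
    using le[of b a] le[of a b] assms h_commute[of "smul a e"] by (cases "b \<le> a") auto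
qed

end

sublocale convexified_L_space \<subseteq> Xsum: comm_monoid_set add theta
  by unfold_locales (auto simp: add_assoc[symmetric] add_commute, metis add_assoc add_commute)

context convexified_L_space
begin

lemma h_sum_le: "finite A \<Longrightarrow> h (Xsum.F u A) (Xsum.F v A) \<le> (\<Sum>i\<in>A. h (u i) (v i))"
proof (induction A rule: finite_induct)
  case (insert a A)
  then show ?case
    using h_add_add_le[of "u a" "Xsum.F u A" "v a" "Xsum.F v A"] by simp
qed simp

lemma smul_sum_convex:
  assumes e: "e \<in> convex_elems add smul" and "finite A" "\<And>i. i \<in> A \<Longrightarrow> 0 \<le> c i"
  shows "smul (\<Sum>i\<in>A. c i) e = Xsum.F (\<lambda>i. smul (c i) e) A"
  using assms(2,3)
proof (induction A rule: finite_induct)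
  case (insert a A)
  then show ?case by (simp add: smul_add_convex[OF e] sum_nonneg)
qed simp

lemma h_converges_const: "h_converges h (\<lambda>n. x) x"
  by (simp add: h_converges_def)

lemma h_converges_dist_le:
  assumes a: "h_converges h a x" and b: "h_converges h b y"
    and c: "c \<longlonglongrightarrow> c0" and le: "\<And>n. h (a n) (b n) \<le> c n"
  shows "h x y \<le> c0"
proof -
  have "(\<lambda>n. h (a n) x + c n + h (b n) y) \<longlonglongrightarrow> 0 + c0 + 0"
    using a b c by (intro tendsto_add) (simp_all add: h_converges_def)
  then have lim: "(\<lambda>n. h (a n) x + c n + h (b n) y) \<longlonglongrightarrow> c0"
    by simp
  have "h x y \<le> h (a n) x + c n + h (b n) y" for n
    using h_triangle[of x y "a n"] h_triangle[of "a n" y "b n"] h_commute[of x "a n"] le[of n]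
    by linarith
  then show ?thesis
    by (intro LIMSEQ_le_const[OF lim]) blast
qed

lemma h_converges_unique:
  assumes "h_converges h a x" "h_converges h a y"
  shows "x = y"
proof -
  have "h x y \<le> 0"
    by (rule h_converges_dist_le[OF assms tendsto_const]) simp
  then show ?thesis by (simp add: h_le_0_iff)
qed

end

lemma X_simple_iff_simple_function: "X_simple M f \<longleftrightarrow> simple_function M f"
proof
  assume "simple_function M f"
  then show "X_simple M f" unfolding X_simple_def by (auto dest: simple_functionD)
qed (simp add: X_simple_def simple_function_def)

lemma (in finite_measure) has_bochner_integral_simple_function_comp:
  fixes k :: "'c \<Rightarrow> real"
  assumes g: "simple_function M g"
  shows "has_bochner_integral M (\<lambda>t. k (g t))
           (\<Sum>v\<in>g ` space M. measure M (g -` {v} \<inter> space M) * k v)"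
proof -
  have sbi: "Bochner_Integration.simple_bochner_integrable M (\<lambda>t. k (g t))"
  proof
    show "simple_function M (\<lambda>t. k (g t))" using g by (rule simple_function_compose1)
  qed simp
  have "Bochner_Integration.simple_bochner_integral M (\<lambda>t. k (g t))
          = (\<Sum>v\<in>g ` space M. measure M {x\<in>space M. g x = v} *\<^sub>R k v)"
    by (rule simple_bochner_integral_partition[OF sbi g]) auto
  also have "\<dots> = (\<Sum>v\<in>g ` space M. measure M (g -` {v} \<inter> space M) * k v)"
    by (intro sum.cong refl) (simp add: vimage_def Int_def conj_commute)
  finally show ?thesis
    using has_bochner_integral_simple_bochner_integrable[OF sbi] by simp
qed

lemma (in finite_measure) abs_integral_diff_le:
  fixes f g :: "'a \<Rightarrow> real"
  assumes "integrable M f" "integrable M g" "\<And>t. t \<in> space M \<Longrightarrow> \<bar>f t - g t\<bar> \<le> c"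
  shows "\<bar>(\<integral>t. f t \<partial>M) - (\<integral>t. g t \<partial>M)\<bar> \<le> measure M (space M) * c"
proof -
  have "\<bar>(\<integral>t. f t \<partial>M) - (\<integral>t. g t \<partial>M)\<bar> = \<bar>\<integral>t. f t - g t \<partial>M\<bar>"
    using assms(1,2) by simp
  also have "\<dots> \<le> (\<integral>t. \<bar>f t - g t\<bar> \<partial>M)"
    by (rule integral_abs_bound)
  also have "\<dots> \<le> (\<integral>t. c \<partial>M)"
    using assms by (intro integral_mono) auto
  finally show ?thesis by simp
qed

section \<open>The integral of uniform limits of simple functions\<close>

locale L_space_integration = convexified_L_space add smul theta h P + finite_measure \<mu>
  for add :: "'a \<Rightarrow> 'a \<Rightarrow> 'a" and smul :: "real \<Rightarrow> 'a \<Rightarrow> 'a" and theta :: 'a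
    and h :: "'a \<Rightarrow> 'a \<Rightarrow> real" and P :: "'a \<Rightarrow> 'a" and \<mu> :: "'b measure"
begin

abbreviation simple_int :: "('b \<Rightarrow> 'a) \<Rightarrow> 'a" where
  "simple_int s \<equiv> simple_integral_X add smul theta P \<mu> s"

abbreviation int_X :: "('b \<Rightarrow> 'a) \<Rightarrow> 'a" where
  "int_X u \<equiv> integral_X add smul theta h P \<mu> u"

lemma simple_int_eq:
  "simple_int s = Xsum.F (\<lambda>y. smul (measure \<mu> (s -` {y} \<inter> space \<mu>)) (P y)) (s ` space \<mu>)"
  by (simp add: simple_integral_X_def Xsum.eq_fold comp_def)

lemma simple_int_comp:
  assumes g: "simple_function \<mu> g"
  shows "simple_int (\<lambda>t. k (g t))
           = Xsum.F (\<lambda>v. smul (measure \<mu> (g -` {v} \<inter> space \<mu>)) (P (k v))) (g ` space \<mu>)"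
proof -
  define V where "V = g ` space \<mu>"
  define H where "H = (\<lambda>v. smul (measure \<mu> (g -` {v} \<inter> space \<mu>)) (P (k v)))"
  have V: "finite V" using g by (simp add: V_def simple_functionD)
  have "simple_int (\<lambda>t. k (g t))
          = Xsum.F (\<lambda>y. smul (measure \<mu> ((\<lambda>t. k (g t)) -` {y} \<inter> space \<mu>)) (P y)) (k ` V)"
    by (simp add: simple_int_eq V_def image_image)
  also have "\<dots> = Xsum.F (\<lambda>y. Xsum.F H {v \<in> V. k v = y}) (k ` V)"
  proof (rule Xsum.cong)
    fix y
    have "(\<lambda>t. k (g t)) -` {y} \<inter> space \<mu> = (\<Union>v\<in>{v \<in> V. k v = y}. g -` {v} \<inter> space \<mu>)"
      by (auto simp: V_def)
    also have "measure \<mu> \<dots> = (\<Sum>v\<in>{v \<in> V. k v = y}. measure \<mu> (g -` {v} \<inter> space \<mu>))"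
      using V g
      by (intro finite_measure_finite_Union) (auto simp: disjoint_family_on_def simple_functionD)
    finally have "measure \<mu> ((\<lambda>t. k (g t)) -` {y} \<inter> space \<mu>)
                    = (\<Sum>v\<in>{v \<in> V. k v = y}. measure \<mu> (g -` {v} \<inter> space \<mu>))" .
    then show "smul (measure \<mu> ((\<lambda>t. k (g t)) -` {y} \<inter> space \<mu>)) (P y) = Xsum.F H {v \<in> V. k v = y}"
      using V by (simp add: smul_sum_convex[OF P_in_convex_elems] H_def)
  qed simp
  also have "\<dots> = Xsum.F H V"
    using V by (intro Xsum.group) auto
  finally show ?thesis by (simp add: H_def V_def)
qed

lemma h_simple_int_le:
  assumes s: "simple_function \<mu> s" and s': "simple_function \<mu> s'"
  shows "integrable \<mu> (\<lambda>t. h (s t) (s' t))"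
    and "h (simple_int s) (simple_int s') \<le> (\<integral>t. h (s t) (s' t) \<partial>\<mu>)"
proof -
  define g where "g = (\<lambda>t. (s t, s' t))"
  define V where "V = g ` space \<mu>"
  define m where "m = (\<lambda>v. measure \<mu> (g -` {v} \<inter> space \<mu>))"
  have g: "simple_function \<mu> g" using s s' by (simp add: g_def)
  have V: "finite V" using g by (simp add: V_def simple_functionD)
  have int: "has_bochner_integral \<mu> (\<lambda>t. h (s t) (s' t)) (\<Sum>v\<in>V. m v * h (fst v) (snd v))"
    using has_bochner_integral_simple_function_comp[OF g, of "\<lambda>v. h (fst v) (snd v)"]
    by (simp add: g_def V_def m_def)
  then show "integrable \<mu> (\<lambda>t. h (s t) (s' t))" by (rule integrable.intros)
  have "h (simple_int s) (simple_int s')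
          = h (Xsum.F (\<lambda>v. smul (m v) (P (fst v))) V) (Xsum.F (\<lambda>v. smul (m v) (P (snd v))) V)"
    using simple_int_comp[OF g, of fst] simple_int_comp[OF g, of snd]
    by (simp add: g_def V_def m_def)
  also have "\<dots> \<le> (\<Sum>v\<in>V. h (smul (m v) (P (fst v))) (smul (m v) (P (snd v))))"
    using V by (rule h_sum_le)
  also have "\<dots> \<le> (\<Sum>v\<in>V. m v * h (fst v) (snd v))"
    by (intro sum_mono) (simp add: h_smul m_def mult_left_mono h_P_le)
  also have "\<dots> = (\<integral>t. h (s t) (s' t) \<partial>\<mu>)"
    using int by (simp add: has_bochner_integral_integral_eq)
  finally show "h (simple_int s) (simple_int s') \<le> (\<integral>t. h (s t) (s' t) \<partial>\<mu>)" .
qed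

lemma simple_int_P:
  assumes s: "simple_function \<mu> s"
  shows "simple_int (\<lambda>t. P (s t)) = simple_int s"
  using simple_int_comp[OF s, of P] by (simp add: simple_int_eq)

lemma simple_int_smul_convex:
  assumes e: "e \<in> convex_elems add smul" and \<phi>: "simple_function \<mu> \<phi>"
    and nonneg: "\<And>t. t \<in> space \<mu> \<Longrightarrow> 0 \<le> \<phi> t"
  shows "simple_int (\<lambda>t. smul (\<phi> t) e) = smul (\<integral>t. \<phi> t \<partial>\<mu>) e"
proof -
  define V where "V = \<phi> ` space \<mu>"
  define m where "m = (\<lambda>r. measure \<mu> (\<phi> -` {r} \<inter> space \<mu>))"
  have V: "finite V" using \<phi> by (simp add: V_def simple_functionD)
  have "simple_int (\<lambda>t. smul (\<phi> t) e) = Xsum.F (\<lambda>r. smul (m r * r) e) V"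
    using simple_int_comp[OF \<phi>, of "\<lambda>r. smul r e"]
    by (simp add: V_def m_def P_smul P_convex_elem[OF e])
  also have "\<dots> = smul (\<Sum>r\<in>V. m r * r) e"
    using V nonneg by (subst smul_sum_convex[OF e]) (auto simp: V_def m_def)
  also have "(\<Sum>r\<in>V. m r * r) = (\<integral>t. \<phi> t \<partial>\<mu>)"
    using has_bochner_integral_simple_function_comp[OF \<phi>, of "\<lambda>r. r"]
    by (simp add: V_def m_def has_bochner_integral_integral_eq)
  finally show ?thesis .
qed

lemma simple_int_indicator:
  assumes A: "A \<in> sets \<mu>"
  shows "simple_int (\<lambda>t. if t \<in> A then x else theta) = smul (measure \<mu> A) (P x)"
proof -
  have "simple_function \<mu> (\<lambda>t. if t \<in> A then x else theta)"
    using A by (intro simple_function_If_set) auto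
  then have "simple_int (\<lambda>t. if t \<in> A then x else theta)
               = simple_int (\<lambda>t. smul (indicator A t) (P x))"
    by (subst simple_int_P[symmetric]) (auto intro!: arg_cong[where f=simple_int])
  also have "\<dots> = smul (measure \<mu> A) (P x)"
    using A sets.sets_into_space[OF A]
    by (subst simple_int_smul_convex[OF P_in_convex_elems]) (auto simp: Int_absorb2)
  finally show ?thesis .
qed

lemma tendsto_integral_h_approximants:
  assumes s: "\<And>n. simple_function \<mu> (s n)" and s': "\<And>n. simple_function \<mu> (s' n)"
    and bd: "\<And>n t. t \<in> space \<mu> \<Longrightarrow> h (s n t) x0 \<le> C"
    and bd': "\<And>n t. t \<in> space \<mu> \<Longrightarrow> h (s' n t) x0' \<le> C'"
    and ae: "AE t in \<mu>. h_converges h (\<lambda>n. s n t) (u t)"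
    and ae': "AE t in \<mu>. h_converges h (\<lambda>n. s' n t) (u t)"
  shows "(\<lambda>n. \<integral>t. h (s n t) (s' n t) \<partial>\<mu>) \<longlonglongrightarrow> 0"
proof -
  have "(\<lambda>n. \<integral>t. h (s n t) (s' n t) \<partial>\<mu>) \<longlonglongrightarrow> (\<integral>t. 0 \<partial>\<mu>)"
  proof (rule integral_dominated_convergence[where w="\<lambda>_. C + h x0 x0' + C'"])
    show "(\<lambda>t. h (s n t) (s' n t)) \<in> borel_measurable \<mu>" for n
      using h_simple_int_le(1)[OF s s'] by (rule borel_measurable_integrable)
    show "AE t in \<mu>. (\<lambda>n. h (s n t) (s' n t)) \<longlonglongrightarrow> 0"
      using ae ae'
    proof eventually_elim
      case (elim t)
      have "(\<lambda>n. h (s n t) (u t) + h (s' n t) (u t)) \<longlonglongrightarrow> 0 + 0"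
        using elim by (intro tendsto_add) (simp_all add: h_converges_def)
      then have lim: "(\<lambda>n. h (s n t) (u t) + h (s' n t) (u t)) \<longlonglongrightarrow> 0"
        by simp
      have "h (s n t) (s' n t) \<le> h (s n t) (u t) + h (s' n t) (u t)" for n
        using h_triangle[of "s n t" "s' n t" "u t"] h_commute[of "u t" "s' n t"] by linarith
      then show ?case
        by (intro tendsto_sandwich[where f="\<lambda>_. 0", OF _ _ tendsto_const lim])
          (simp_all add: h_nonneg)
    qed
    show "AE t in \<mu>. norm (h (s n t) (s' n t)) \<le> C + h x0 x0' + C'" for n
    proof (rule AE_I2)
      fix t assume t: "t \<in> space \<mu>"
      have "h (s n t) (s' n t) \<le> h (s n t) x0 + h x0 x0' + h x0' (s' n t)"
        using h_triangle[of "s n t" "s' n t" x0] h_triangle[of x0 "s' n t" x0'] by linarith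
      then show "norm (h (s n t) (s' n t)) \<le> C + h x0 x0' + C'"
        using bd[OF t, of n] bd'[OF t, of n] h_commute[of x0' "s' n t"] by (simp add: h_nonneg)
    qed
  qed simp_all
  then show ?thesis by simp
qed

text \<open>The limit in the definition of \<open>integral_X\<close> does not depend on the approximating
  sequence, so the description operator there picks it.\<close>

lemma int_X_eqI:
  assumes s: "\<And>n. simple_function \<mu> (s n)"
    and bd: "\<And>n t. t \<in> space \<mu> \<Longrightarrow> h (s n t) x0 \<le> C"
    and ae: "AE t in \<mu>. h_converges h (\<lambda>n. s n t) (u t)"
    and lim: "h_converges h (\<lambda>n. simple_int (s n)) I"
  shows "int_X u = I"
  unfolding integral_X_def
proof (rule the_equality)
  show "\<exists>s. (\<forall>n. X_simple \<mu> (s n)) \<and> (\<exists>x0 C. \<forall>n. \<forall>t\<in>space \<mu>. h (s n t) x0 \<le> C) \<and>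
          (AE t in \<mu>. h_converges h (\<lambda>n. s n t) (u t)) \<and> h_converges h (\<lambda>n. simple_int (s n)) I"
    using assms unfolding X_simple_iff_simple_function by blast
next
  fix I'
  assume "\<exists>s. (\<forall>n. X_simple \<mu> (s n)) \<and> (\<exists>x0 C. \<forall>n. \<forall>t\<in>space \<mu>. h (s n t) x0 \<le> C) \<and>
          (AE t in \<mu>. h_converges h (\<lambda>n. s n t) (u t)) \<and> h_converges h (\<lambda>n. simple_int (s n)) I'"
  then obtain s' x0' C' where s': "\<And>n. simple_function \<mu> (s' n)"
    and bd': "\<And>n t. t \<in> space \<mu> \<Longrightarrow> h (s' n t) x0' \<le> C'"
    and ae': "AE t in \<mu>. h_converges h (\<lambda>n. s' n t) (u t)"
    and lim': "h_converges h (\<lambda>n. simple_int (s' n)) I'"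
    unfolding X_simple_iff_simple_function by blast
  have "h I' I \<le> 0"
  proof (rule h_converges_dist_le[OF lim' lim])
    show "(\<lambda>n. \<integral>t. h (s' n t) (s n t) \<partial>\<mu>) \<longlonglongrightarrow> 0"
      by (rule tendsto_integral_h_approximants[OF s' s bd' bd ae' ae])
    show "h (simple_int (s' n)) (simple_int (s n)) \<le> (\<integral>t. h (s' n t) (s n t) \<partial>\<mu>)" for n
      by (rule h_simple_int_le(2)[OF s' s])
  qed
  then show "I' = I" by (simp add: h_le_0_iff)
qed

definition uniform_simple_approx :: "(nat \<Rightarrow> 'b \<Rightarrow> 'a) \<Rightarrow> (nat \<Rightarrow> real) \<Rightarrow> ('b \<Rightarrow> 'a) \<Rightarrow> bool" where
  "uniform_simple_approx s \<delta> u \<longleftrightarrow>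
     (\<forall>n. simple_function \<mu> (s n)) \<and> \<delta> \<longlonglongrightarrow> 0 \<and> (\<forall>n. \<forall>t\<in>space \<mu>. h (s n t) (u t) \<le> \<delta> n)"

lemma uniform_simple_approx_Cauchy:
  assumes "uniform_simple_approx s \<delta> u"
  shows "\<forall>e>0. \<exists>N. \<forall>i\<ge>N. \<forall>j\<ge>N. h (simple_int (s i)) (simple_int (s j)) < e"
proof (intro allI impI)
  fix e :: real assume "e > 0"
  define m where "m = measure \<mu> (space \<mu>)"
  have s: "\<And>n. simple_function \<mu> (s n)" and \<delta>: "\<delta> \<longlonglongrightarrow> 0"
    and close: "\<And>n t. t \<in> space \<mu> \<Longrightarrow> h (s n t) (u t) \<le> \<delta> n"
    using assms by (auto simp: uniform_simple_approx_def)
  have dist: "h (simple_int (s i)) (simple_int (s j)) \<le> m * \<delta> i + m * \<delta> j" for i j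
  proof -
    have "h (s i t) (s j t) \<le> \<delta> i + \<delta> j" if "t \<in> space \<mu>" for t
      using h_triangle[of "s i t" "s j t" "u t"] close[OF that, of i] close[OF that, of j]
        h_commute[of "u t" "s j t"] by linarith
    then have "(\<integral>t. h (s i t) (s j t) \<partial>\<mu>) \<le> (\<integral>t. \<delta> i + \<delta> j \<partial>\<mu>)"
      by (intro integral_mono h_simple_int_le(1) s) auto
    then show ?thesis
      using h_simple_int_le(2)[OF s s, of i j] by (simp add: m_def distrib_left)
  qed
  have "(\<lambda>n. m * \<delta> n) \<longlonglongrightarrow> 0"
    using tendsto_mult_right_zero[OF \<delta>] by simp
  then obtain N where N: "\<And>n. n \<ge> N \<Longrightarrow> m * \<delta> n < e / 2"
    using order_tendstoD(2)[of _ 0 sequentially "e / 2"] \<open>e > 0\<close>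
    by (auto simp: eventually_sequentially)
  show "\<exists>N. \<forall>i\<ge>N. \<forall>j\<ge>N. h (simple_int (s i)) (simple_int (s j)) < e"
    using dist N by (intro exI[of _ N]) (smt (verit) field_sum_of_halves)
qed

lemma int_X_uniform_limit:
  assumes approx: "uniform_simple_approx s \<delta> u"
  shows "h_converges h (\<lambda>n. simple_int (s n)) (int_X u)"
proof -
  have s: "\<And>n. simple_function \<mu> (s n)" and \<delta>: "\<delta> \<longlonglongrightarrow> 0"
    and close: "\<And>n t. t \<in> space \<mu> \<Longrightarrow> h (s n t) (u t) \<le> \<delta> n"
    using approx by (auto simp: uniform_simple_approx_def)
  obtain I where lim: "h_converges h (\<lambda>n. simple_int (s n)) I"
    using complete uniform_simple_approx_Cauchy[OF approx]
    unfolding h_complete_def by (elim allE[of _ "\<lambda>n. simple_int (s n)"] impE) blast+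
  have "Bseq \<delta>"
    using \<delta> by (intro convergent_imp_Bseq convergentI)
  then obtain B where B: "\<And>n. \<bar>\<delta> n\<bar> \<le> B"
    by (auto simp: Bseq_def)
  define M where "M = Max ((\<lambda>y. h y theta) ` s 0 ` space \<mu>)"
  have bd: "h (s n t) theta \<le> B + B + M" if t: "t \<in> space \<mu>" for n t
  proof -
    have "h (s 0 t) theta \<le> M"
      unfolding M_def using s[of 0] t by (intro Max_ge) (simp_all add: simple_functionD)
    moreover have "h (s n t) (s 0 t) \<le> B + B"
      using h_triangle[of "s n t" "s 0 t" "u t"] close[OF t, of n] close[OF t, of 0]
        h_commute[of "u t" "s 0 t"] B[of n] B[of 0] by linarith
    ultimately show ?thesis
      using h_triangle[of "s n t" theta "s 0 t"] by linarith
  qed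
  have ae: "AE t in \<mu>. h_converges h (\<lambda>n. s n t) (u t)"
  proof (rule AE_I2)
    fix t assume t: "t \<in> space \<mu>"
    show "h_converges h (\<lambda>n. s n t) (u t)"
      unfolding h_converges_def using close[OF t]
      by (intro tendsto_sandwich[where f="\<lambda>_. 0", OF _ _ tendsto_const \<delta>]) (simp_all add: h_nonneg)
  qed
  show ?thesis
    using lim int_X_eqI[OF s bd ae lim] by simp
qed

lemma int_X_simple:
  assumes "simple_function \<mu> s"
  shows "int_X s = simple_int s"
proof -
  have "uniform_simple_approx (\<lambda>_. s) (\<lambda>_. 0) s"
    using assms by (simp add: uniform_simple_approx_def)
  then have "h_converges h (\<lambda>_. simple_int s) (int_X s)"
    by (rule int_X_uniform_limit)
  then show ?thesis
    using h_converges_const by (rule h_converges_unique)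
qed

lemma h_int_X_le:
  assumes u: "uniform_simple_approx s \<delta> u" and v: "uniform_simple_approx s' \<delta>' v"
    and w: "integrable \<mu> w" and le: "\<And>t. t \<in> space \<mu> \<Longrightarrow> h (u t) (v t) \<le> w t"
  shows "h (int_X u) (int_X v) \<le> (\<integral>t. w t \<partial>\<mu>)"
proof -
  define m where "m = measure \<mu> (space \<mu>)"
  have s: "\<And>n. simple_function \<mu> (s n)" and \<delta>: "\<delta> \<longlonglongrightarrow> 0"
    and close: "\<And>n t. t \<in> space \<mu> \<Longrightarrow> h (s n t) (u t) \<le> \<delta> n"
    using u by (auto simp: uniform_simple_approx_def)
  have s': "\<And>n. simple_function \<mu> (s' n)" and \<delta>': "\<delta>' \<longlonglongrightarrow> 0"
    and close': "\<And>n t. t \<in> space \<mu> \<Longrightarrow> h (s' n t) (v t) \<le> \<delta>' n"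
    using v by (auto simp: uniform_simple_approx_def)
  show ?thesis
  proof (rule h_converges_dist_le[OF int_X_uniform_limit[OF u] int_X_uniform_limit[OF v]])
    show "(\<lambda>n. (\<integral>t. w t \<partial>\<mu>) + m * (\<delta> n + \<delta>' n)) \<longlonglongrightarrow> (\<integral>t. w t \<partial>\<mu>)"
      using tendsto_add[OF tendsto_const tendsto_mult_right_zero[OF tendsto_add_zero[OF \<delta> \<delta>']]]
      by simp
    fix n
    have "h (s n t) (s' n t) \<le> w t + (\<delta> n + \<delta>' n)" if t: "t \<in> space \<mu>" for t
      using h_triangle[of "s n t" "s' n t" "u t"] h_triangle[of "u t" "s' n t" "v t"]
        close[OF t, of n] close'[OF t, of n] le[OF t] h_commute[of "v t" "s' n t"] by linarith
    then have "(\<integral>t. h (s n t) (s' n t) \<partial>\<mu>) \<le> (\<integral>t. w t + (\<delta> n + \<delta>' n) \<partial>\<mu>)"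
      using w by (intro integral_mono h_simple_int_le(1) s s') auto
    also have "\<dots> = (\<integral>t. w t \<partial>\<mu>) + m * (\<delta> n + \<delta>' n)"
      using w by (simp add: m_def)
    finally show "h (simple_int (s n)) (simple_int (s' n)) \<le> (\<integral>t. w t \<partial>\<mu>) + m * (\<delta> n + \<delta>' n)"
      using h_simple_int_le(2)[OF s[of n] s'[of n]] by linarith
  qed
qed

lemma uniform_simple_approx_smul_convex:
  assumes e: "e \<in> convex_elems add smul"
    and \<phi>s: "\<And>n. simple_function \<mu> (\<phi>s n)" "\<And>n t. t \<in> space \<mu> \<Longrightarrow> 0 \<le> \<phi>s n t"
    and \<delta>: "\<delta> \<longlonglongrightarrow> 0" and close: "\<And>n t. t \<in> space \<mu> \<Longrightarrow> \<bar>\<phi>s n t - \<phi> t\<bar> \<le> \<delta> n"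
    and \<phi>: "\<And>t. t \<in> space \<mu> \<Longrightarrow> 0 \<le> \<phi> t"
  shows "uniform_simple_approx (\<lambda>n t. smul (\<phi>s n t) e) (\<lambda>n. \<delta> n * h e theta) (\<lambda>t. smul (\<phi> t) e)"
  unfolding uniform_simple_approx_def
proof (intro conjI allI ballI)
  show "simple_function \<mu> (\<lambda>t. smul (\<phi>s n t) e)" for n
    using \<phi>s(1) by (rule simple_function_compose1)
  show "(\<lambda>n. \<delta> n * h e theta) \<longlonglongrightarrow> 0"
    using \<delta> by (rule tendsto_mult_left_zero)
  fix n t assume t: "t \<in> space \<mu>"
  have "h (smul (\<phi>s n t) e) (smul (\<phi> t) e) \<le> \<bar>\<phi>s n t - \<phi> t\<bar> * h e theta"
    using e \<phi>s(2)[OF t] \<phi>[OF t] by (rule h_smul_convex_le)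
  also have "\<dots> \<le> \<delta> n * h e theta"
    using close[OF t] h_nonneg by (rule mult_right_mono)
  finally show "h (smul (\<phi>s n t) e) (smul (\<phi> t) e) \<le> \<delta> n * h e theta" .
qed

lemma int_X_smul_convex:
  assumes e: "e \<in> convex_elems add smul"
    and \<phi>s: "\<And>n. simple_function \<mu> (\<phi>s n)" "\<And>n t. t \<in> space \<mu> \<Longrightarrow> 0 \<le> \<phi>s n t"
    and \<delta>: "\<delta> \<longlonglongrightarrow> 0" and close: "\<And>n t. t \<in> space \<mu> \<Longrightarrow> \<bar>\<phi>s n t - \<phi> t\<bar> \<le> \<delta> n"
    and \<phi>: "integrable \<mu> \<phi>" "\<And>t. t \<in> space \<mu> \<Longrightarrow> 0 \<le> \<phi> t"
  shows "int_X (\<lambda>t. smul (\<phi> t) e) = smul (\<integral>t. \<phi> t \<partial>\<mu>) e"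
proof -
  define m where "m = measure \<mu> (space \<mu>)"
  have lim: "h_converges h (\<lambda>n. simple_int (\<lambda>t. smul (\<phi>s n t) e)) (int_X (\<lambda>t. smul (\<phi> t) e))"
    using uniform_simple_approx_smul_convex[OF e \<phi>s \<delta> close \<phi>(2)] by (rule int_X_uniform_limit)
  have dist: "h (simple_int (\<lambda>t. smul (\<phi>s n t) e)) (smul (\<integral>t. \<phi> t \<partial>\<mu>) e) \<le> m * \<delta> n * h e theta"
    for n
  proof -
    have "h (simple_int (\<lambda>t. smul (\<phi>s n t) e)) (smul (\<integral>t. \<phi> t \<partial>\<mu>) e)
            = h (smul (\<integral>t. \<phi>s n t \<partial>\<mu>) e) (smul (\<integral>t. \<phi> t \<partial>\<mu>) e)"
      by (simp add: simple_int_smul_convex[OF e \<phi>s(1) \<phi>s(2)[of _ n]])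
    also have "\<dots> \<le> \<bar>(\<integral>t. \<phi>s n t \<partial>\<mu>) - (\<integral>t. \<phi> t \<partial>\<mu>)\<bar> * h e theta"
      by (intro h_smul_convex_le[OF e] Bochner_Integration.integral_nonneg)
        (simp_all add: \<phi>s(2) \<phi>(2))
    also have "\<dots> \<le> m * \<delta> n * h e theta"
    proof (rule mult_right_mono[OF _ h_nonneg])
      have "integrable \<mu> (\<phi>s n)"
        using integrable_simple_function[OF \<phi>s(1)] by simp
      then show "\<bar>(\<integral>t. \<phi>s n t \<partial>\<mu>) - (\<integral>t. \<phi> t \<partial>\<mu>)\<bar> \<le> m * \<delta> n"
        unfolding m_def using \<phi>(1) close by (rule abs_integral_diff_le)
    qed
    finally show ?thesis .
  qed
  have lim0: "(\<lambda>n. m * \<delta> n * h e theta) \<longlonglongrightarrow> 0"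
    using tendsto_mult_right_zero[OF tendsto_mult_left_zero[OF \<delta>]] by (simp add: mult.assoc)
  have "h_converges h (\<lambda>n. simple_int (\<lambda>t. smul (\<phi>s n t) e)) (smul (\<integral>t. \<phi> t \<partial>\<mu>) e)"
    unfolding h_converges_def using dist
    by (intro tendsto_sandwich[where f="\<lambda>_. 0", OF _ _ tendsto_const lim0]) (simp_all add: h_nonneg)
  then show ?thesis
    using lim by (rule h_converges_unique[symmetric])
qed

end

section \<open>Moduli of continuity and finite quantizers\<close>

context
  fixes \<omega> :: "real \<Rightarrow> real"
  assumes \<omega>: "modulus_of_continuity \<omega>"
begin

lemma modulus_mono: "0 \<le> a \<Longrightarrow> a \<le> b \<Longrightarrow> \<omega> a \<le> \<omega> b"
  using \<omega> unfolding modulus_of_continuity_def mono_on_def by auto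

lemma modulus_nonneg: "0 \<le> a \<Longrightarrow> 0 \<le> \<omega> a"
  using \<omega> unfolding modulus_of_continuity_def by auto

lemma modulus_zero: "\<omega> 0 = 0"
  using \<omega> unfolding modulus_of_continuity_def by auto

lemma modulus_diff_le:
  assumes "0 \<le> a" "0 \<le> b"
  shows "\<bar>\<omega> a - \<omega> b\<bar> \<le> \<omega> \<bar>a - b\<bar>"
proof -
  have le: "\<omega> x - \<omega> y \<le> \<omega> (x - y)" if "0 \<le> y" "y \<le> x" for x y
  proof -
    have "0 \<le> x - y" using that by simp
    then have "\<omega> (y + (x - y)) \<le> \<omega> y + \<omega> (x - y)"
      using \<omega> that(1) unfolding modulus_of_continuity_def by blast
    then show ?thesis by simp
  qed
  show ?thesis
    using le[of a b] le[of b a] modulus_mono[of b a] modulus_mono[of a b] assms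
    by (cases "b \<le> a") (auto simp: abs_if)
qed

lemma modulus_dist_diff_le: "\<bar>\<omega> (dist t s) - \<omega> (dist t s')\<bar> \<le> \<omega> (dist s s')"
proof -
  have "\<bar>\<omega> (dist t s) - \<omega> (dist t s')\<bar> \<le> \<omega> \<bar>dist t s - dist t s'\<bar>"
    by (rule modulus_diff_le) auto
  also have "\<dots> \<le> \<omega> (dist s s')"
    using abs_dist_diff_le[of s t s'] by (intro modulus_mono) (auto simp: dist_commute)
  finally show ?thesis .
qed

lemma modulus_tendsto_0: "(\<lambda>n. \<omega> (1 / Suc n)) \<longlonglongrightarrow> 0"
proof -
  have "continuous_on {0..} \<omega>"
    using \<omega> by (simp add: modulus_of_continuity_def)
  then have "(\<lambda>n. \<omega> (1 / Suc n)) \<longlonglongrightarrow> \<omega> 0"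
    by (rule continuous_on_tendsto_compose[OF _ LIMSEQ_Suc[OF lim_1_over_n]]) auto
  then show ?thesis by (simp add: modulus_zero)
qed

lemma continuous_modulus_dist: "continuous_on UNIV (\<lambda>s. \<omega> (dist t s))"
proof (rule continuous_on_compose2[where t="{0..}" and g=\<omega> and f="\<lambda>s. dist t s"])
  show "continuous_on {0..} \<omega>"
    using \<omega> by (simp add: modulus_of_continuity_def)
qed (auto intro!: continuous_intros)

end

fun first_near :: "real \<Rightarrow> 'b::metric_space list \<Rightarrow> 'b \<Rightarrow> 'b" where
  "first_near d [] t = undefined"
| "first_near d (c # cs) t = (if dist c t < d then c else first_near d cs t)"

lemma simple_function_first_near: "simple_function borel (first_near d cs)"
proof (induction cs)
  case Nil
  have "first_near d [] = (\<lambda>_. undefined)" by auto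
  then show ?case by simp
next
  case (Cons c cs)
  have eq: "first_near d (c # cs) = (\<lambda>t. if t \<in> ball c d then c else first_near d cs t)"
    by auto
  show ?case
    unfolding eq by (rule simple_function_If_set[OF simple_function_const Cons.IH]) simp
qed

lemma dist_first_near: "t \<in> (\<Union>c\<in>set cs. ball c d) \<Longrightarrow> dist (first_near d cs t) t < d"
  by (induction cs) auto

lemma compact_simple_quantizer:
  assumes S: "compact S" and d: "0 < d"
  shows "\<exists>q. simple_function borel q \<and> (\<forall>t\<in>S. dist (q t) t < d)"
proof -
  have "S \<subseteq> (\<Union>c\<in>UNIV. ball c d)"
    using d by (blast intro: centre_in_ball[THEN iffD2])
  then obtain C where "C \<subseteq> UNIV" "finite C" and cover: "S \<subseteq> (\<Union>c\<in>C. ball c d)"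
    by (rule compactE_image[OF S open_ball])
  then obtain cs where cs: "set cs = C"
    using finite_list by blast
  have "dist (first_near d cs t) t < d" if "t \<in> S" for t
    using that cover cs by (intro dist_first_near) blast
  then show ?thesis
    using simple_function_first_near by blast
qed

lemma compact_simple_quantizer_sequence:
  assumes "compact S"
  shows "\<exists>q. \<forall>n. simple_function borel (q n) \<and> (\<forall>t\<in>S. dist (q n t) t < 1 / Suc n)"
proof (rule choice, rule allI)
  show "\<exists>q. simple_function borel q \<and> (\<forall>t\<in>S. dist (q t) t < 1 / Suc n)" for n
    by (rule compact_simple_quantizer[OF assms]) simp
qed

section \<open>Averages of functions in \<open>H\<^sup>\<omega>\<close>\<close>

locale L_space_average = L_space_integration add smul theta h P \<mu>
  for add :: "'a \<Rightarrow> 'a \<Rightarrow> 'a" and smul :: "real \<Rightarrow> 'a \<Rightarrow> 'a" and theta :: 'a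
    and h :: "'a \<Rightarrow> 'a \<Rightarrow> real" and P :: "'a \<Rightarrow> 'a" and \<mu> :: "'b::metric_space measure" +
  fixes \<omega> :: "real \<Rightarrow> real"
  assumes compact_space: "compact (UNIV :: 'b set)"
    and sets_\<mu>: "sets \<mu> = sets borel"
    and modulus: "modulus_of_continuity \<omega>"
begin

lemma space_\<mu>: "space \<mu> = UNIV"
  using sets_eq_imp_space_eq[OF sets_\<mu>] by simp

lemma simple_function_\<mu>: "simple_function borel g \<Longrightarrow> simple_function \<mu> g"
  using simple_function_cong_algebra[OF sets_\<mu>, of g] by (simp add: space_\<mu>)

lemma integrable_modulus_dist_on:
  assumes Q: "Q \<in> sets borel"
  shows "integrable \<mu> (\<lambda>s. indicator Q s * \<omega> (dist t s))"
proof -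
  have cont: "continuous_on UNIV (\<lambda>s. \<omega> (dist t s))"
    by (rule continuous_modulus_dist[OF modulus])
  obtain B where B: "\<And>s. norm (\<omega> (dist t s)) \<le> B"
    using compact_imp_bounded[OF compact_continuous_image[OF cont compact_space]]
    unfolding bounded_iff by blast
  have "(\<lambda>s. \<omega> (dist t s)) \<in> borel_measurable \<mu>"
    using borel_measurable_continuous_onI[OF cont]
    by (simp add: measurable_cong_sets[OF sets_\<mu> refl])
  then have "integrable \<mu> (\<lambda>s. \<omega> (dist t s))"
    using B by (intro integrable_const_bound[where B=B]) simp_all
  moreover have "Q \<in> sets \<mu>"
    using Q sets_\<mu> by simp
  ultimately show ?thesis
    using integrable_mult_indicator[of Q \<mu> "\<lambda>s. \<omega> (dist t s)"] by simp
qed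

lemma H_omega_uniform_simple_approx:
  assumes f: "f \<in> H_omega \<omega> h" and Q: "Q \<in> sets borel"
  shows "\<exists>s \<delta>. uniform_simple_approx s \<delta> (\<lambda>t. if t \<in> Q then f t else theta)"
proof -
  obtain q :: "nat \<Rightarrow> 'b \<Rightarrow> 'b"
    where q: "\<And>n. simple_function borel (q n)" and near: "\<And>n t. dist (q n t) t < 1 / Suc n"
    using compact_simple_quantizer_sequence[OF compact_space] by blast
  have "uniform_simple_approx (\<lambda>n t. if t \<in> Q then f (q n t) else theta) (\<lambda>n. \<omega> (1 / Suc n))
          (\<lambda>t. if t \<in> Q then f t else theta)"
    unfolding uniform_simple_approx_def
  proof (intro conjI allI ballI)
    show "simple_function \<mu> (\<lambda>t. if t \<in> Q then f (q n t) else theta)" for n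
      using Q
      by (intro simple_function_\<mu> simple_function_If_set simple_function_compose1[OF q]) auto
    show "(\<lambda>n. \<omega> (1 / Suc n)) \<longlonglongrightarrow> 0"
      by (rule modulus_tendsto_0[OF modulus])
    fix n t
    have "h (f (q n t)) (f t) \<le> \<omega> (dist (q n t) t)"
      using f by (simp add: H_omega_def)
    also have "\<dots> \<le> \<omega> (1 / Suc n)"
      using near[of n t] by (intro modulus_mono[OF modulus]) auto
    finally show "h (if t \<in> Q then f (q n t) else theta) (if t \<in> Q then f t else theta)
                    \<le> \<omega> (1 / Suc n)"
      using modulus_nonneg[OF modulus, of "1 / Suc n"] by simp
  qed
  then show ?thesis by blast
qed

lemma average_deviation_le:
  assumes Q: "Q \<in> sets borel" and \<mu>Q: "0 < measure \<mu> Q" and f: "f \<in> H_omega \<omega> h"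
  shows "h (P (f t)) (smul (1 / measure \<mu> Q) (set_integral_X add smul theta h P \<mu> Q f))
           \<le> 1 / measure \<mu> Q * (LINT s:Q|\<mu>. \<omega> (dist t s))"
proof -
  define c where "c = 1 / measure \<mu> Q"
  define u where "u = (\<lambda>s. if s \<in> Q then f t else theta)"
  have Q\<mu>: "Q \<in> sets \<mu>" using Q sets_\<mu> by simp
  have u: "simple_function \<mu> u"
    unfolding u_def using Q\<mu> by (intro simple_function_If_set) auto
  then have "uniform_simple_approx (\<lambda>_. u) (\<lambda>_. 0) u"
    by (simp add: uniform_simple_approx_def)
  moreover obtain s \<delta> where "uniform_simple_approx s \<delta> (\<lambda>s. if s \<in> Q then f s else theta)"
    using H_omega_uniform_simple_approx[OF f Q] by blast
  moreover have "integrable \<mu> (\<lambda>s. indicator Q s * \<omega> (dist t s))"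
    using Q by (rule integrable_modulus_dist_on)
  moreover have "h (u s) (if s \<in> Q then f s else theta) \<le> indicator Q s * \<omega> (dist t s)" for s
    using f by (simp add: u_def H_omega_def)
  ultimately have bound: "h (int_X u) (set_integral_X add smul theta h P \<mu> Q f)
                            \<le> (LINT s:Q|\<mu>. \<omega> (dist t s))"
    unfolding set_integral_X_def set_lebesgue_integral_def by (simp add: h_int_X_le)
  have "int_X u = smul (measure \<mu> Q) (P (f t))"
    using int_X_simple[OF u] simple_int_indicator[OF Q\<mu>] by (simp add: u_def)
  then have "h (P (f t)) (smul c (set_integral_X add smul theta h P \<mu> Q f))
               = h (smul c (int_X u)) (smul c (set_integral_X add smul theta h P \<mu> Q f))"
    using \<mu>Q by (simp add: c_def)
  also have "\<dots> = c * h (int_X u) (set_integral_X add smul theta h P \<mu> Q f)"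
    by (simp add: h_smul c_def)
  also have "\<dots> \<le> c * (LINT s:Q|\<mu>. \<omega> (dist t s))"
    using bound by (simp add: c_def divide_right_mono)
  finally show ?thesis by (simp add: c_def)
qed

lemma smul_modulus_dist_in_H_omega:
  assumes e: "e \<in> convex_elems add smul" "e \<noteq> theta"
  shows "(\<lambda>s. smul (\<omega> (dist t s) / h e theta) e) \<in> H_omega \<omega> h"
  unfolding H_omega_def
proof (intro CollectI allI)
  fix s s'
  define d where "d = h e theta"
  have d: "0 < d" using e(2) h_nonneg[of e theta] by (simp add: d_def order_le_less)
  have coeff_nonneg: "0 \<le> \<omega> (dist t x) / d" for x
    using d by (simp add: modulus_nonneg[OF modulus])
  have "h (smul (\<omega> (dist t s) / d) e) (smul (\<omega> (dist t s') / d) e)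
          \<le> \<bar>\<omega> (dist t s) / d - \<omega> (dist t s') / d\<bar> * d"
    using h_smul_convex_le[OF e(1) coeff_nonneg coeff_nonneg] by (simp add: d_def)
  also have "\<dots> = \<bar>\<omega> (dist t s) - \<omega> (dist t s')\<bar>"
    using d by (simp add: field_simps abs_div)
  also have "\<dots> \<le> \<omega> (dist s s')"
    by (rule modulus_dist_diff_le[OF modulus])
  finally show "h (smul (\<omega> (dist t s) / d) e) (smul (\<omega> (dist t s') / d) e) \<le> \<omega> (dist s s')" .
qed

lemma set_integral_X_smul_modulus_dist:
  assumes Q: "Q \<in> sets borel" and e: "e \<in> convex_elems add smul" "e \<noteq> theta"
  shows "set_integral_X add smul theta h P \<mu> Q (\<lambda>s. smul (\<omega> (dist t s) / h e theta) e)
           = smul ((LINT s:Q|\<mu>. \<omega> (dist t s)) / h e theta) e"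
proof -
  define d where "d = h e theta"
  define \<phi> where "\<phi> = (\<lambda>s. indicator Q s * \<omega> (dist t s) / d)"
  have d: "0 < d" using e(2) h_nonneg[of e theta] by (simp add: d_def order_le_less)
  have \<omega>_nonneg: "0 \<le> \<omega> (dist a b)" for a b
    by (simp add: modulus_nonneg[OF modulus])
  obtain q :: "nat \<Rightarrow> 'b \<Rightarrow> 'b"
    where q: "\<And>n. simple_function borel (q n)" and near: "\<And>n t. dist (q n t) t < 1 / Suc n"
    using compact_simple_quantizer_sequence[OF compact_space] by blast
  have "set_integral_X add smul theta h P \<mu> Q (\<lambda>s. smul (\<omega> (dist t s) / d) e)
          = int_X (\<lambda>s. smul (\<phi> s) e)"
    unfolding set_integral_X_def by (rule arg_cong[where f=int_X]) (auto simp: \<phi>_def)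
  also have "\<dots> = smul (\<integral>s. \<phi> s \<partial>\<mu>) e"
  proof (rule int_X_smul_convex[OF e(1)])
    show "simple_function \<mu> (\<lambda>s. indicator Q s * \<omega> (dist t (q n s)) / d)" for n
      using Q by (intro simple_function_\<mu> simple_function_div simple_function_mult
          simple_function_compose1[OF q] simple_function_indicator) auto
    show "(\<lambda>n. \<omega> (1 / Suc n) / d) \<longlonglongrightarrow> 0"
      using tendsto_divide_zero[OF modulus_tendsto_0[OF modulus]] by simp
    show "\<bar>indicator Q s * \<omega> (dist t (q n s)) / d - \<phi> s\<bar> \<le> \<omega> (1 / Suc n) / d" for n s
    proof -
      have "\<bar>\<omega> (dist t (q n s)) - \<omega> (dist t s)\<bar> \<le> \<omega> (dist (q n s) s)"
        by (rule modulus_dist_diff_le[OF modulus])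
      also have "\<dots> \<le> \<omega> (1 / Suc n)"
        using near[of n s] by (intro modulus_mono[OF modulus]) auto
      finally show ?thesis
        using d modulus_nonneg[OF modulus, of "1 / Suc n"]
        by (auto simp: \<phi>_def indicator_def abs_div divide_right_mono simp flip: diff_divide_distrib)
    qed
    show "integrable \<mu> \<phi>"
      unfolding \<phi>_def using integrable_modulus_dist_on[OF Q] by simp
  qed (use d in \<open>auto simp: \<phi>_def \<omega>_nonneg indicator_def intro!: divide_nonneg_pos\<close>)
  also have "(\<integral>s. \<phi> s \<partial>\<mu>) = (LINT s:Q|\<mu>. \<omega> (dist t s)) / d"
    by (simp add: \<phi>_def set_lebesgue_integral_def)
  finally show ?thesis by (simp add: d_def)
qed

lemma average_deviation_attained:
  assumes Q: "Q \<in> sets borel" and e: "e \<in> convex_elems add smul" "e \<noteq> theta"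
  shows "\<exists>f\<in>H_omega \<omega> h.
           h (P (f t)) (smul (1 / measure \<mu> Q) (set_integral_X add smul theta h P \<mu> Q f))
             = 1 / measure \<mu> Q * (LINT s:Q|\<mu>. \<omega> (dist t s))"
proof
  define f where "f = (\<lambda>s. smul (\<omega> (dist t s) / h e theta) e)"
  define J where "J = (LINT s:Q|\<mu>. \<omega> (dist t s))"
  show "f \<in> H_omega \<omega> h"
    unfolding f_def using e by (rule smul_modulus_dist_in_H_omega)
  have "0 \<le> J"
    unfolding J_def set_lebesgue_integral_def
    by (intro Bochner_Integration.integral_nonneg) (simp add: modulus_nonneg[OF modulus])
  moreover have "P (f t) = theta"
    by (simp add: f_def modulus_zero[OF modulus])
  moreover have "0 < h e theta"
    using e(2) h_nonneg[of e theta] by (simp add: order_le_less)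
  ultimately show "h (P (f t)) (smul (1 / measure \<mu> Q) (set_integral_X add smul theta h P \<mu> Q f))
                     = 1 / measure \<mu> Q * J"
    unfolding f_def using set_integral_X_smul_modulus_dist[OF Q e, of t] e(2)
    by (simp add: f_def J_def h_commute[of theta] h_smul_theta)
qed

lemma average_deviation_SUP:
  assumes Q: "Q \<in> sets borel" "0 < measure \<mu> Q" and nontrivial: "convex_elems add smul \<noteq> {theta}"
  shows "(SUP f\<in>H_omega \<omega> h.
            h (P (f t)) (smul (1 / measure \<mu> Q) (set_integral_X add smul theta h P \<mu> Q f)))
           = 1 / measure \<mu> Q * (LINT s:Q|\<mu>. \<omega> (dist t s))"
proof -
  define dev where
    "dev f = h (P (f t)) (smul (1 / measure \<mu> Q) (set_integral_X add smul theta h P \<mu> Q f))" for f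
  define bound where "bound = 1 / measure \<mu> Q * (LINT s:Q|\<mu>. \<omega> (dist t s))"
  obtain e where "e \<in> convex_elems add smul" "e \<noteq> theta"
    using nontrivial theta_in_convex_elems by blast
  then obtain f where "f \<in> H_omega \<omega> h" "dev f = bound"
    using average_deviation_attained[OF Q(1)] unfolding dev_def bound_def by blast
  moreover have "dev g \<le> bound" if "g \<in> H_omega \<omega> h" for g
    using average_deviation_le[OF Q that] unfolding dev_def bound_def .
  ultimately have "(SUP g\<in>H_omega \<omega> h. dev g) = bound"
    by (intro cSup_eq_maximum) (auto intro: rev_image_eqI)
  then show ?thesis by (simp add: dev_def bound_def)
qed

end

theorem corollary1:
  fixes add :: "'a \<Rightarrow> 'a \<Rightarrow> 'a" and smul :: "real \<Rightarrow> 'a \<Rightarrow> 'a" and theta :: 'a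
    and h :: "'a \<Rightarrow> 'a \<Rightarrow> real" and P :: "'a \<Rightarrow> 'a"
    and \<mu> :: "'b::metric_space measure" and \<omega> :: "real \<Rightarrow> real" and Q :: "'b set"
  assumes X: "L_space add smul theta h"
    and P: "convexifying_operator add smul h P"
    and T: "compact (UNIV :: 'b set)"
    and mu_borel: "sets \<mu> = sets borel"
    and mu_fin: "finite_measure \<mu>"
    and om: "modulus_of_continuity \<omega>"
    and Q: "compact Q" and muQ: "measure \<mu> Q > 0"
  shows "(\<forall>t. \<forall>f\<in>H_omega \<omega> h.
            h (P (f t)) (smul (1 / measure \<mu> Q) (set_integral_X add smul theta h P \<mu> Q f))
              \<le> (1 / measure \<mu> Q) * (LINT s:Q|\<mu>. \<omega> (dist t s)))
       \<and> (isotropic add h \<and> convex_elems add smul \<noteq> {theta} \<longrightarrow>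
           (\<forall>t. (SUP f\<in>H_omega \<omega> h.
                   h (P (f t)) (smul (1 / measure \<mu> Q) (set_integral_X add smul theta h P \<mu> Q f)))
                 = (1 / measure \<mu> Q) * (LINT s:Q|\<mu>. \<omega> (dist t s))))"
proof -
  interpret L_space_average add smul theta h P \<mu> \<omega>
    by (intro L_space_average.intro L_space_integration.intro convexified_L_space.intro
        L_space_average_axioms.intro X P mu_fin T mu_borel om)
  have Qb: "Q \<in> sets borel" using Q by (rule borel_compact)
  show ?thesis
    using average_deviation_le[OF Qb muQ] average_deviation_SUP[OF Qb muQ] by auto
qed

end
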